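(* Let $N\ge1$, $0\le k\le N$, and $I=\{N-k+1,\dots,N\}$. Then, as polynomials in $\xi_1,\dots,\xi_N$, \[ \sum_{\substack{J\subset\{1,\dots,N\}\\|J|=k}}\operatorname{sgn}(I,J)\prod_{i\in J}(\xi_i-1)^{N-k}\prod_{\substack{i<j\\ i,j\in J}}(\xi_j-\xi_i)\prod_{\substack{i<j\\ i,j\in J^c}}(\xi_j-\xi_i)=\prod_{1\le i<j\le N}(\xi_j-\xi_i). \]
   Context: For $I,J\subset\{1,\dots,N\}$ with $|I|=|J|=k$, write $I=\{i_1<\dots<i_k\}$, $I^c=\{1,\dots,N\}\setminus I=\{i_{k+1}<\dots<i_N\}$, $J=\{j_1<\dots<j_k\}$, $J^c=\{j_{k+1}<\dots<j_N\}$; $\operatorname{sgn}(I,J)$ is the sign of the permutation sending $i_m\mapsto j_m$ for $m=1,\dots,N$. *)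

theory Defs
  imports "HOL-Combinatorics.Permutations"
begin

definition sgnIJ :: "nat \<Rightarrow> nat set \<Rightarrow> nat set \<Rightarrow> int" where
  "sgnIJ N I J =
     (let is = sorted_list_of_set I @ sorted_list_of_set ({1..N} - I);
          js = sorted_list_of_set J @ sorted_list_of_set ({1..N} - J)
      in sign (\<lambda>x. case map_of (zip is js) x of Some y \<Rightarrow> y | None \<Rightarrow> x))"

end

(*
  With y = \<xi> - 1 the right-hand side is the Vandermonde determinant det (y s ^ (r - 1)) with
  rows and columns indexed by {1..N}, since shifting all variables leaves their differences
  unchanged. The left-hand side is the generalised Laplace expansion of this determinant along
  the last k rows I: the permutation whose sign is sgn(I,J) maps I onto J and I^c onto J^c
  monotonically, so the minor on rows I and columns J is the Vandermonde determinant of J with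
  column j scaled by y j ^ (N - k), and the complementary minor is the Vandermonde determinant
  of J^c.
*)

theory Submission
  imports Defs "Jordan_Normal_Form.Determinant"
begin

definition det_on :: "'i set \<Rightarrow> ('i \<Rightarrow> 'i \<Rightarrow> 'a::comm_ring_1) \<Rightarrow> 'a" where
  "det_on A F = (\<Sum>\<pi> | \<pi> permutes A. of_int (sign \<pi>) * (\<Prod>r\<in>A. F r (\<pi> r)))"

lemma det_on_cong:
  assumes "\<And>r s. r \<in> A \<Longrightarrow> s \<in> A \<Longrightarrow> F r s = G r s"
  shows "det_on A F = det_on A G"
  unfolding det_on_def
  by (intro sum.cong refl arg_cong2[where f = "(*)"] prod.cong)
     (use assms in \<open>auto simp: permutes_in_image\<close>)

lemma det_on_reindex:
  assumes f: "bij_betw f A B" and "finite A"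
  shows "det_on B G = det_on A (\<lambda>r s. G (f r) (f s))"
proof -
  have inj: "inj_on f A" and img: "f ` A = B"
    using f by (auto simp: bij_betw_def)
  have bij: "bij_betw (map_permutation A f) {\<pi>. \<pi> permutes A} {\<pi>. \<pi> permutes B}"
  proof -
    have "map_permutation A f = (\<lambda>\<pi> x. if x \<in> B then f (\<pi> (inv_into A f x)) else x)"
      by (auto simp: fun_eq_iff map_permutation_def restrict_id_def img)
    then show ?thesis using bij_betw_permutations[OF f] by simp
  qed
  have "det_on B G = (\<Sum>\<pi> | \<pi> permutes A. of_int (sign (map_permutation A f \<pi>))
                        * (\<Prod>r\<in>B. G r (map_permutation A f \<pi> r)))"
    unfolding det_on_def by (rule sum.reindex_bij_betw[OF bij, symmetric])
  also have "\<dots> = det_on A (\<lambda>r s. G (f r) (f s))"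
    unfolding det_on_def
  proof (intro sum.cong refl)
    fix \<pi> assume "\<pi> \<in> {\<pi>. \<pi> permutes A}"
    then have \<pi>: "\<pi> permutes A" by simp
    have "(\<Prod>r\<in>B. G r (map_permutation A f \<pi> r)) = (\<Prod>r\<in>A. G (f r) (map_permutation A f \<pi> (f r)))"
      by (rule prod.reindex_bij_betw[OF f, symmetric])
    also have "\<dots> = (\<Prod>r\<in>A. G (f r) (f (\<pi> r)))"
      by (intro prod.cong refl) (simp add: map_permutation_apply[OF inj])
    finally show "of_int (sign (map_permutation A f \<pi>)) * (\<Prod>r\<in>B. G r (map_permutation A f \<pi> r))
        = of_int (sign \<pi>) * (\<Prod>r\<in>A. G (f r) (f (\<pi> r)))"
      using sign_map_permutation[OF inj \<pi> \<open>finite A\<close>] by simp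
  qed
  finally show ?thesis .
qed

lemma det_on_scale_cols:
  "det_on A (\<lambda>r s. d s * G r s) = (\<Prod>s\<in>A. d s) * det_on A G"
  unfolding det_on_def sum_distrib_left
proof (intro sum.cong refl)
  fix \<pi> assume "\<pi> \<in> {\<pi>. \<pi> permutes A}"
  then have "(\<Prod>r\<in>A. d (\<pi> r)) = (\<Prod>s\<in>A. d s)"
    using prod.permute[of \<pi> A d] by (simp add: o_def)
  then show "of_int (sign \<pi>) * (\<Prod>r\<in>A. d (\<pi> r) * G r (\<pi> r)) =
      (\<Prod>s\<in>A. d s) * (of_int (sign \<pi>) * (\<Prod>r\<in>A. G r (\<pi> r)))"
    by (simp add: prod.distrib mult_ac)
qed

lemma det_on_atLeastLessThan: "det_on {0..<n} F = det (mat n n (\<lambda>(i, j). F i j))"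
  unfolding det_on_def det_def by (auto intro!: sum.cong prod.cong simp: permutes_in_image)

lemma det_vandermonde_Suc:
  fixes x :: "nat \<Rightarrow> 'a::comm_ring_1"
  shows "det (mat (Suc n) (Suc n) (\<lambda>(i, j). x j ^ i))
       = det (mat n n (\<lambda>(i, j). (x (Suc j) - x 0) * x (Suc j) ^ i))"
proof -
  define A :: "'a mat" where "A = mat (Suc n) (Suc n) (\<lambda>(i, j). x j ^ i)"
  \<comment> \<open>subtract \<open>x 0\<close> times row \<open>i - 1\<close> from each row \<open>i > 0\<close>, clearing column 0 below row 0\<close>
  define L :: "'a mat" where
    "L = mat (Suc n) (Suc n) (\<lambda>(i, j). if i = j then 1 else if i = Suc j then - x 0 else 0)"
  define B where "B = L * A"
  have A: "A \<in> carrier_mat (Suc n) (Suc n)" and L: "L \<in> carrier_mat (Suc n) (Suc n)"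
    by (auto simp: A_def L_def)
  have "det L = 1"
    by (subst det_lower_triangular[OF _ L]) (auto simp: L_def prod_list_diag_prod)
  then have "det A = det B"
    using det_mult[OF L A] by (simp add: B_def)
  have B_entries: "B $$ (i, j) = (if i = 0 then 1 else x j ^ i - x 0 * x j ^ (i - 1))"
    if "i < Suc n" "j < Suc n" for i j
  proof -
    have "B $$ (i, j) = (\<Sum>l<Suc n. L $$ (i, l) * A $$ (l, j))"
      using that L A by (simp add: B_def scalar_prod_def atLeast0LessThan)
    also have "\<dots> = (\<Sum>l<Suc n. (if l = i then x j ^ l else 0)
                                 + (if i = Suc l then - x 0 * x j ^ l else 0))"
      using that by (intro sum.cong) (auto simp: L_def A_def)
    also have "\<dots> = (if i = 0 then 1 else x j ^ i - x 0 * x j ^ (i - 1))"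
      using that by (cases i) (auto simp: sum.distrib)
    finally show ?thesis .
  qed
  have B: "B \<in> carrier_mat (Suc n) (Suc n)"
    using L A by (simp add: B_def)
  have "det B = (\<Sum>i<Suc n. B $$ (i, 0) * cofactor B i 0)"
    by (rule laplace_expansion_column[OF B]) simp
  also have "\<dots> = (\<Sum>i<Suc n. if i = 0 then cofactor B 0 0 else 0)"
  proof (intro sum.cong refl)
    fix i assume "i \<in> {..<Suc n}"
    then show "B $$ (i, 0) * cofactor B i 0 = (if i = 0 then cofactor B 0 0 else 0)"
      by (cases i) (auto simp: B_entries)
  qed
  also have "\<dots> = cofactor B 0 0"
    by simp
  also have "\<dots> = det (mat_delete B 0 0)"
    by (simp add: cofactor_def)
  also have "mat_delete B 0 0 = mat n n (\<lambda>(i, j). (x (Suc j) - x 0) * x (Suc j) ^ i)"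
    using B by (intro eq_matI) (auto simp: mat_delete_def B_entries algebra_simps)
  finally show ?thesis
    using \<open>det A = det B\<close> by (simp add: A_def)
qed

lemma prod_pairs_less_Suc:
  fixes g :: "nat \<Rightarrow> nat \<Rightarrow> 'a::comm_monoid_mult"
  shows "(\<Prod>(i, j)\<in>{(i, j). i < j \<and> j < Suc n}. g i j)
       = (\<Prod>j<n. g 0 (Suc j)) * (\<Prod>(i, j)\<in>{(i, j). i < j \<and> j < n}. g (Suc i) (Suc j))"
proof -
  have split: "{(i, j). i < j \<and> j < Suc n}
      = (\<lambda>j. (0, Suc j)) ` {..<n} \<union> (\<lambda>(i, j). (Suc i, Suc j)) ` {(i, j). i < j \<and> j < n}"
    unfolding set_eq_iff
  proof (intro allI)
    fix p :: "nat \<times> nat"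
    show "p \<in> {(i, j). i < j \<and> j < Suc n} \<longleftrightarrow>
        p \<in> (\<lambda>j. (0, Suc j)) ` {..<n} \<union> (\<lambda>(i, j). (Suc i, Suc j)) ` {(i, j). i < j \<and> j < n}"
      by (cases p; rename_tac a b; case_tac a; case_tac b) (auto simp: image_iff)
  qed
  have fin: "finite {(i, j). i < j \<and> j < (n::nat)}"
    by (rule finite_subset[of _ "{..<n} \<times> {..<n}"]) auto
  show ?thesis
    unfolding split
    by (subst prod.union_disjoint) (use fin in \<open>auto simp: prod.reindex inj_on_def split_beta\<close>)
qed

lemma det_on_vandermonde:
  fixes x :: "nat \<Rightarrow> 'a::comm_ring_1"
  shows "det_on {0..<n} (\<lambda>r s. x s ^ r) = (\<Prod>(i, j)\<in>{(i, j). i < j \<and> j < n}. x j - x i)"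
proof (induction n arbitrary: x)
  case 0
  show ?case by (simp add: det_on_def)
next
  case (Suc n)
  have "det_on {0..<Suc n} (\<lambda>r s. x s ^ r)
      = det_on {0..<n} (\<lambda>r s. (x (Suc s) - x 0) * (x \<circ> Suc) s ^ r)"
    by (simp add: det_on_atLeastLessThan det_vandermonde_Suc)
  also have "\<dots> = (\<Prod>j<n. x (Suc j) - x 0) * det_on {0..<n} (\<lambda>r s. (x \<circ> Suc) s ^ r)"
    by (simp add: det_on_scale_cols atLeast0LessThan)
  finally show ?case
    by (simp add: Suc.IH prod_pairs_less_Suc[of "\<lambda>i j. x j - x i"])
qed

lemma permutes_image_Diff:
  assumes "\<sigma> permutes U" "\<sigma> ` I = I" "I \<subseteq> U"
  shows "\<sigma> ` (U - I) = U - I"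
  using image_set_diff[OF permutes_inj[OF assms(1)], of U I] assms by (simp add: permutes_image)

lemma bij_betw_compose_permutes_Diff:
  assumes "I \<subseteq> U"
  shows "bij_betw (\<lambda>(p, q). p \<circ> q) ({p. p permutes I} \<times> {q. q permutes U - I})
           {\<sigma>. \<sigma> permutes U \<and> \<sigma> ` I = I}"
proof -
  have compose: "p \<circ> q permutes U \<and> (p \<circ> q) ` I = I"
    if p: "p permutes I" and q: "q permutes U - I" for p q
  proof -
    have "q ` I = I"
      using q by (auto simp: permutes_not_in image_iff)
    then have "(p \<circ> q) ` I = I"
      using permutes_image[OF p] by (simp only: image_comp[symmetric])
    moreover have "p \<circ> q permutes U"
      using permutes_subset[OF p assms] permutes_subset[OF q, of U] by (auto intro: permutes_compose)
    ultimately show ?thesis by simp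
  qed
  have split: "restrict_id (p \<circ> q) I = p \<and> restrict_id (p \<circ> q) (U - I) = q"
    if p: "p permutes I" and q: "q permutes U - I" for p q
  proof -
    have "q x \<notin> I" if "x \<notin> I" for x
      using permutes_in_image[OF q, of x] permutes_not_in[OF q, of x] that by auto
    then show ?thesis
      using p q by (auto simp: fun_eq_iff restrict_id_def permutes_not_in)
  qed
  have restrict: "restrict_id \<sigma> I permutes I \<and> restrict_id \<sigma> (U - I) permutes U - I"
    and recombine: "restrict_id \<sigma> I \<circ> restrict_id \<sigma> (U - I) = \<sigma>"
    if \<sigma>: "\<sigma> permutes U" "\<sigma> ` I = I" for \<sigma>
  proof -
    have compl: "\<sigma> ` (U - I) = U - I"
      using permutes_image_Diff[OF \<sigma> assms] .
    have "bij_betw \<sigma> I I" "bij_betw \<sigma> (U - I) (U - I)"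
      using compl \<sigma> permutes_inj[OF \<sigma>(1)] by (auto simp: bij_betw_def intro: inj_on_subset)
    then show "restrict_id \<sigma> I permutes I \<and> restrict_id \<sigma> (U - I) permutes U - I"
      by (auto intro: permutes_restrict_id)
    show "restrict_id \<sigma> I \<circ> restrict_id \<sigma> (U - I) = \<sigma>"
      using compl \<sigma>(1) by (auto simp: fun_eq_iff restrict_id_def permutes_not_in)
  qed
  show ?thesis
  proof (rule bij_betwI[where g = "\<lambda>\<sigma>. (restrict_id \<sigma> I, restrict_id \<sigma> (U - I))"])
    show "(\<lambda>(p, q). p \<circ> q) \<in> {p. p permutes I} \<times> {q. q permutes U - I}
        \<rightarrow> {\<sigma>. \<sigma> permutes U \<and> \<sigma> ` I = I}"
      using compose by (simp add: Pi_iff)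
    show "(\<lambda>\<sigma>. (restrict_id \<sigma> I, restrict_id \<sigma> (U - I))) \<in> {\<sigma>. \<sigma> permutes U \<and> \<sigma> ` I = I}
        \<rightarrow> {p. p permutes I} \<times> {q. q permutes U - I}"
      using restrict by (simp add: Pi_iff)
  qed (use split recombine in auto)
qed

lemma bij_betw_compose_left_permutes:
  assumes t: "t permutes U" "t ` I = J"
  shows "bij_betw ((\<circ>) t) {\<rho>. \<rho> permutes U \<and> \<rho> ` I = I} {\<sigma>. \<sigma> permutes U \<and> \<sigma> ` I = J}"
proof -
  let ?t' = "Hilbert_Choice.inv t"
  have t': "?t' permutes U" "?t' ` J = I"
    using t by (auto simp: permutes_inv image_comp permutes_inv_o)
  have "t \<circ> \<rho> permutes U \<and> (t \<circ> \<rho>) ` I = J" if "\<rho> permutes U" "\<rho> ` I = I" for \<rho>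
    using that t permutes_compose[OF that(1) t(1)] by (simp only: image_comp[symmetric] simp_thms)
  moreover have "?t' \<circ> \<sigma> permutes U \<and> (?t' \<circ> \<sigma>) ` I = I" if "\<sigma> permutes U" "\<sigma> ` I = J" for \<sigma>
    using that t' permutes_compose[OF that(1) t'(1)] by (simp only: image_comp[symmetric] simp_thms)
  ultimately show ?thesis
    by (intro bij_betwI[where g = "(\<circ>) ?t'"])
       (use t in \<open>auto simp: o_assoc[symmetric] permutes_inv_o\<close>)
qed

lemma det_on_term_compose_blocks:
  fixes F :: "'i \<Rightarrow> 'i \<Rightarrow> 'a::comm_ring_1"
  assumes U: "finite U" and IU: "I \<subseteq> U" and t: "t permutes U"
    and p: "p permutes I" and q: "q permutes U - I"
  shows "of_int (sign (t \<circ> (p \<circ> q))) * (\<Prod>r\<in>U. F r (t (p (q r))))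
       = of_int (sign t) * (of_int (sign p) * (\<Prod>r\<in>I. F r (t (p r))))
           * (of_int (sign q) * (\<Prod>r\<in>U - I. F r (t (q r))))"
proof -
  have "permutation t" "permutation p" "permutation q"
    using t p q U IU by (auto intro: permutes_imp_permutation finite_subset)
  then have "sign (t \<circ> (p \<circ> q)) = sign t * sign p * sign q"
    by (simp add: sign_compose permutation_compose)
  moreover have "(\<Prod>r\<in>U. F r (t (p (q r))))
      = (\<Prod>r\<in>U - I. F r (t (p (q r)))) * (\<Prod>r\<in>I. F r (t (p (q r))))"
    by (rule prod.subset_diff[OF IU U])
  moreover have "(\<Prod>r\<in>U - I. F r (t (p (q r)))) = (\<Prod>r\<in>U - I. F r (t (q r)))"
  proof (intro prod.cong refl)
    fix r assume "r \<in> U - I"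
    then have "q r \<notin> I"
      using permutes_in_image[OF q] by blast
    then show "F r (t (p (q r))) = F r (t (q r))"
      by (simp add: permutes_not_in[OF p])
  qed
  moreover have "(\<Prod>r\<in>I. F r (t (p (q r)))) = (\<Prod>r\<in>I. F r (t (p r)))"
    using q by (intro prod.cong refl) (auto simp: permutes_not_in)
  ultimately show ?thesis
    by (simp add: mult_ac)
qed

lemma sum_permutes_image_eq:
  fixes F :: "'i \<Rightarrow> 'i \<Rightarrow> 'a::comm_ring_1"
  assumes U: "finite U" and IU: "I \<subseteq> U" and t: "t permutes U" "t ` I = J"
  shows "(\<Sum>\<sigma> | \<sigma> permutes U \<and> \<sigma> ` I = J. of_int (sign \<sigma>) * (\<Prod>r\<in>U. F r (\<sigma> r)))
       = of_int (sign t) * det_on I (\<lambda>r s. F r (t s)) * det_on (U - I) (\<lambda>r s. F r (t s))"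
proof -
  define summand :: "('i \<Rightarrow> 'i) \<Rightarrow> 'a" where
    "summand \<sigma> = of_int (sign \<sigma>) * (\<Prod>r\<in>U. F r (\<sigma> r))" for \<sigma>
  have "(\<Sum>\<sigma> | \<sigma> permutes U \<and> \<sigma> ` I = J. summand \<sigma>)
      = (\<Sum>\<rho> | \<rho> permutes U \<and> \<rho> ` I = I. summand (t \<circ> \<rho>))"
    by (rule sum.reindex_bij_betw[OF bij_betw_compose_left_permutes[OF t], symmetric])
  also have "\<dots> = (\<Sum>(p, q)\<in>{p. p permutes I} \<times> {q. q permutes U - I}. summand (t \<circ> (p \<circ> q)))"
    using sum.reindex_bij_betw[OF bij_betw_compose_permutes_Diff[OF IU], of "\<lambda>\<rho>. summand (t \<circ> \<rho>)"]
    by (simp add: case_prod_unfold)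
  also have "\<dots> = (\<Sum>p | p permutes I. \<Sum>q | q permutes U - I. of_int (sign t)
      * (of_int (sign p) * (\<Prod>r\<in>I. F r (t (p r)))) * (of_int (sign q) * (\<Prod>r\<in>U - I. F r (t (q r)))))"
    unfolding sum.cartesian_product[symmetric] by (intro sum.cong refl)
      (use det_on_term_compose_blocks[OF U IU t(1)] in \<open>simp add: summand_def\<close>)
  also have "\<dots> = of_int (sign t) * det_on I (\<lambda>r s. F r (t s)) * det_on (U - I) (\<lambda>r s. F r (t s))"
    by (simp only: det_on_def sum_distrib_left[symmetric] sum_distrib_right[symmetric])
  finally show ?thesis
    by (simp add: summand_def)
qed

lemma det_on_laplace:
  fixes F :: "'i \<Rightarrow> 'i \<Rightarrow> 'a::comm_ring_1"
  assumes U: "finite U" and IU: "I \<subseteq> U"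
    and \<tau>: "\<And>J. J \<subseteq> U \<Longrightarrow> card J = card I \<Longrightarrow> \<tau> J permutes U \<and> \<tau> J ` I = J"
  shows "det_on U F = (\<Sum>J | J \<subseteq> U \<and> card J = card I.
           of_int (sign (\<tau> J)) * det_on I (\<lambda>r s. F r (\<tau> J s)) * det_on (U - I) (\<lambda>r s. F r (\<tau> J s)))"
proof -
  have image_mem: "\<sigma> ` I \<in> {J. J \<subseteq> U \<and> card J = card I}" if "\<sigma> permutes U" for \<sigma>
    using that IU permutes_inj[OF that] by (auto simp: permutes_in_image card_image inj_on_subset)
  have "det_on U F = (\<Sum>J | J \<subseteq> U \<and> card J = card I.
      \<Sum>\<sigma> | \<sigma> permutes U \<and> \<sigma> ` I = J. of_int (sign \<sigma>) * (\<Prod>r\<in>U. F r (\<sigma> r)))"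
    unfolding det_on_def
    by (subst sum.group[symmetric, where g = "\<lambda>\<sigma>. \<sigma> ` I"])
       (use U image_mem in \<open>auto simp: finite_permutations intro!: sum.cong\<close>)
  also have "\<dots> = (\<Sum>J | J \<subseteq> U \<and> card J = card I.
      of_int (sign (\<tau> J)) * det_on I (\<lambda>r s. F r (\<tau> J s)) * det_on (U - I) (\<lambda>r s. F r (\<tau> J s)))"
    using \<tau> by (intro sum.cong refl sum_permutes_image_eq[OF U IU]) auto
  finally show ?thesis .
qed

lemma strict_mono_on_sorted_list_of_set_nth:
  "strict_mono_on {0..<card S} ((!) (sorted_list_of_set S))"
  by (rule strict_mono_onI) (simp add: sorted_wrt_nth_less[OF strict_sorted_list_of_set])

lemma bij_betw_sorted_list_of_set_nth:
  "finite S \<Longrightarrow> bij_betw ((!) (sorted_list_of_set S)) {0..<card S} S"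
  by (rule bij_betw_nth) (auto simp: distinct_sorted_list_of_set)

lemma prod_ordered_pairs_reindex:
  fixes f :: "'i::linorder \<Rightarrow> 'j::linorder"
  assumes f: "bij_betw f A B" "strict_mono_on A f"
  shows "(\<Prod>(a, b)\<in>{(a, b). a \<in> A \<and> b \<in> A \<and> a < b}. g (f a) (f b))
       = (\<Prod>(i, j)\<in>{(i, j). i \<in> B \<and> j \<in> B \<and> i < j}. g i j)"
proof -
  have "bij_betw (\<lambda>(a, b). (f a, f b)) {(a, b). a \<in> A \<and> b \<in> A \<and> a < b}
      {(i, j). i \<in> B \<and> j \<in> B \<and> i < j}"
  proof (rule bij_betw_imageI)
    show "inj_on (\<lambda>(a, b). (f a, f b)) {(a, b). a \<in> A \<and> b \<in> A \<and> a < b}"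
      using bij_betw_imp_inj_on[OF f(1)] by (auto simp: inj_on_def)
    show "(\<lambda>(a, b). (f a, f b)) ` {(a, b). a \<in> A \<and> b \<in> A \<and> a < b}
        = {(i, j). i \<in> B \<and> j \<in> B \<and> i < j}"
      using f strict_mono_on_less[OF f(2)]
      by (fastforce simp: bij_betw_def image_iff)
  qed
  from prod.reindex_bij_betw[OF this, of "\<lambda>(i, j). g i j"] show ?thesis
    by (simp add: case_prod_unfold)
qed

lemma det_on_power_rows:
  fixes y :: "'i::linorder \<Rightarrow> 'a::comm_ring_1"
  assumes J: "finite J" "card J = k"
    and t: "\<And>a. a < k \<Longrightarrow> t (Suc (m + a)) = sorted_list_of_set J ! a"
  shows "det_on {m<..m + k} (\<lambda>r s. y (t s) ^ (r - 1))
       = (\<Prod>j\<in>J. y j ^ m) * (\<Prod>(i, j)\<in>{(i, j). i \<in> J \<and> j \<in> J \<and> i < j}. y j - y i)"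
proof -
  let ?e = "(!) (sorted_list_of_set J)"
  have shift: "bij_betw (\<lambda>a. Suc (m + a)) {0..<k} {m<..m + k}"
    by (rule bij_betwI[where g = "\<lambda>r. r - Suc m"]) auto
  have "det_on {m<..m + k} (\<lambda>r s. y (t s) ^ (r - 1))
      = det_on {0..<k} (\<lambda>a b. y (t (Suc (m + b))) ^ (m + a))"
    by (simp add: det_on_reindex[OF shift])
  also have "\<dots> = det_on {0..<k} (\<lambda>a b. y (?e b) ^ m * (y \<circ> ?e) b ^ a)"
    by (rule det_on_cong) (simp add: t power_add)
  also have "\<dots> = (\<Prod>b\<in>{0..<k}. y (?e b) ^ m)
      * (\<Prod>(a, b)\<in>{(a, b). a \<in> {0..<k} \<and> b \<in> {0..<k} \<and> a < b}. y (?e b) - y (?e a))"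
  proof -
    have "{(a, b). a \<in> {0..<k} \<and> b \<in> {0..<k} \<and> a < b} = {(a, b). a < b \<and> b < k}"
      by auto
    then show ?thesis
      by (simp add: det_on_scale_cols det_on_vandermonde)
  qed
  also have "\<dots> = (\<Prod>j\<in>J. y j ^ m) * (\<Prod>(i, j)\<in>{(i, j). i \<in> J \<and> j \<in> J \<and> i < j}. y j - y i)"
  proof -
    have e: "bij_betw ?e {0..<k} J" "strict_mono_on {0..<k} ?e"
      using bij_betw_sorted_list_of_set_nth[OF J(1)] strict_mono_on_sorted_list_of_set_nth[of J] J(2)
      by simp_all
    show ?thesis
      using prod.reindex_bij_betw[OF e(1), of "\<lambda>j. y j ^ m"]
        prod_ordered_pairs_reindex[OF e, of "\<lambda>i j. y j - y i"] by simp
  qed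
  finally show ?thesis .
qed

definition perm_of_lists :: "'a list \<Rightarrow> 'a list \<Rightarrow> 'a \<Rightarrow> 'a" where
  "perm_of_lists xs ys x = (case map_of (zip xs ys) x of Some y \<Rightarrow> y | None \<Rightarrow> x)"

lemma perm_of_lists_nth:
  "length xs = length ys \<Longrightarrow> distinct xs \<Longrightarrow> m < length xs \<Longrightarrow> perm_of_lists xs ys (xs ! m) = ys ! m"
  by (simp add: perm_of_lists_def map_of_zip_nth)

lemma perm_of_lists_permutes:
  assumes "distinct xs" "distinct ys" "length xs = length ys" "set ys = set xs"
  shows "perm_of_lists xs ys permutes set xs"
proof (rule bij_imp_permutes)
  have "bij_betw ((!) ys) {..<length xs} (set xs)"
    using assms by (intro bij_betw_nth) auto
  then have "bij_betw (perm_of_lists xs ys \<circ> (!) xs) {..<length xs} (set xs)"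
    by (rule bij_betw_cong[THEN iffD1, rotated]) (simp add: perm_of_lists_nth assms)
  moreover have "bij_betw ((!) xs) {..<length xs} (set xs)"
    using assms by (intro bij_betw_nth) auto
  ultimately show "bij_betw (perm_of_lists xs ys) (set xs) (set xs)"
    using bij_betw_comp_iff by blast
  show "perm_of_lists xs ys x = x" if "x \<notin> set xs" for x
  proof -
    have "map_of (zip xs ys) x = None"
      using that assms(3) by simp
    then show ?thesis
      by (simp add: perm_of_lists_def)
  qed
qed

definition shuffle_perm :: "nat \<Rightarrow> nat set \<Rightarrow> nat set \<Rightarrow> nat \<Rightarrow> nat" where
  "shuffle_perm N I J = perm_of_lists (sorted_list_of_set I @ sorted_list_of_set ({1..N} - I))
                                      (sorted_list_of_set J @ sorted_list_of_set ({1..N} - J))"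

lemma sgnIJ_eq_sign_shuffle_perm: "sgnIJ N I J = sign (shuffle_perm N I J)"
  unfolding sgnIJ_def shuffle_perm_def perm_of_lists_def[abs_def] Let_def ..

context
  fixes N :: nat and I J :: "nat set"
  assumes I: "I \<subseteq> {1..N}" and J: "J \<subseteq> {1..N}" and card_J: "card J = card I"
begin

private abbreviation (input) "xs \<equiv> sorted_list_of_set I @ sorted_list_of_set ({1..N} - I)"
private abbreviation (input) "ys \<equiv> sorted_list_of_set J @ sorted_list_of_set ({1..N} - J)"

private lemma finite_I: "finite I" and finite_J: "finite J"
  using I J by (auto intro: finite_subset)

private lemma shuffle_lists: "distinct xs" "distinct ys" "length xs = length ys"
  "set xs = {1..N}" "set ys = {1..N}"
  using I J card_J finite_I finite_J by (auto simp: card_Diff_subset)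

lemma shuffle_perm_permutes: "shuffle_perm N I J permutes {1..N}"
  using perm_of_lists_permutes[of xs ys] shuffle_lists by (simp add: shuffle_perm_def)

lemma shuffle_perm_nth:
  "m < card I \<Longrightarrow> shuffle_perm N I J (sorted_list_of_set I ! m) = sorted_list_of_set J ! m"
  using perm_of_lists_nth[of xs ys m] shuffle_lists card_J
  by (simp add: shuffle_perm_def nth_append)

lemma shuffle_perm_nth_Diff:
  "m < card ({1..N} - I) \<Longrightarrow>
     shuffle_perm N I J (sorted_list_of_set ({1..N} - I) ! m) = sorted_list_of_set ({1..N} - J) ! m"
  using perm_of_lists_nth[of xs ys "card I + m"] shuffle_lists card_J
  by (simp add: shuffle_perm_def nth_append)

lemma shuffle_perm_image: "shuffle_perm N I J ` I = J"
proof -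
  have "shuffle_perm N I J ` I = shuffle_perm N I J ` (!) (sorted_list_of_set I) ` {0..<card I}"
    using bij_betw_sorted_list_of_set_nth[OF finite_I] by (simp add: bij_betw_def)
  also have "\<dots> = (!) (sorted_list_of_set J) ` {0..<card J}"
    unfolding image_image card_J by (intro image_cong refl) (simp add: shuffle_perm_nth)
  also have "\<dots> = J"
    using bij_betw_sorted_list_of_set_nth[OF finite_J] by (simp add: bij_betw_def)
  finally show ?thesis .
qed

end

lemma det_on_power_rows_shuffle_perm:
  fixes y :: "nat \<Rightarrow> 'a::comm_ring_1"
  assumes "k \<le> N" and J: "J \<subseteq> {1..N}" "card J = k"
  defines "\<tau> \<equiv> shuffle_perm N {N - k<..N} J"
  shows "det_on {N - k<..N} (\<lambda>r s. y (\<tau> s) ^ (r - 1))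
           = (\<Prod>j\<in>J. y j ^ (N - k)) * (\<Prod>(i, j)\<in>{(i, j). i \<in> J \<and> j \<in> J \<and> i < j}. y j - y i)"
    and "det_on ({1..N} - {N - k<..N}) (\<lambda>r s. y (\<tau> s) ^ (r - 1))
           = (\<Prod>(i, j)\<in>{(i, j). i \<in> {1..N} - J \<and> j \<in> {1..N} - J \<and> i < j}. y j - y i)"
proof -
  have I: "{N - k<..N} \<subseteq> {1..N}" "card {N - k<..N} = k" and compl: "{1..N} - {N - k<..N} = {0<..N - k}"
    using \<open>k \<le> N\<close> by auto
  have fin: "finite J" "finite ({1..N} - J)"
    using J by (auto intro: finite_subset)
  have "\<tau> (Suc (N - k + a)) = sorted_list_of_set J ! a" if "a < k" for a
    using shuffle_perm_nth[OF I(1) J(1), of a] that \<open>k \<le> N\<close> J(2)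
    by (simp add: \<tau>_def I(2) nth_sorted_list_of_set_greaterThanAtMost)
  from det_on_power_rows[OF fin(1) J(2), of \<tau>, OF this]
  show "det_on {N - k<..N} (\<lambda>r s. y (\<tau> s) ^ (r - 1))
      = (\<Prod>j\<in>J. y j ^ (N - k)) * (\<Prod>(i, j)\<in>{(i, j). i \<in> J \<and> j \<in> J \<and> i < j}. y j - y i)"
    using \<open>k \<le> N\<close> by simp
  have "card ({1..N} - J) = N - k"
    using J fin by (simp add: card_Diff_subset)
  moreover have "\<tau> (Suc a) = sorted_list_of_set ({1..N} - J) ! a" if "a < N - k" for a
  proof -
    have "sorted_list_of_set ({1..N} - {N - k<..N}) ! a = Suc a"
      unfolding compl using that by (subst nth_sorted_list_of_set_greaterThanAtMost) simp_all
    then show ?thesis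
      using shuffle_perm_nth_Diff[OF I(1) J(1), of a] that J(2) by (simp add: \<tau>_def I(2) compl)
  qed
  ultimately have "det_on {0<..0 + (N - k)} (\<lambda>r s. y (\<tau> s) ^ (r - 1)) = (\<Prod>j\<in>{1..N} - J. y j ^ 0)
      * (\<Prod>(i, j)\<in>{(i, j). i \<in> {1..N} - J \<and> j \<in> {1..N} - J \<and> i < j}. y j - y i)"
    by (intro det_on_power_rows[OF fin(2)]) simp_all
  then show "det_on ({1..N} - {N - k<..N}) (\<lambda>r s. y (\<tau> s) ^ (r - 1))
      = (\<Prod>(i, j)\<in>{(i, j). i \<in> {1..N} - J \<and> j \<in> {1..N} - J \<and> i < j}. y j - y i)"
    unfolding compl by (simp only: add_0 power_0 prod.neutral_const mult_1)
qed


lemma det_on_power_rows_atLeastAtMost: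
  fixes y :: "nat \<Rightarrow> 'a::comm_ring_1"
  shows "det_on {1..N} (\<lambda>r s. y s ^ (r - 1)) = (\<Prod>(i, j)\<in>{(i, j). 1 \<le> i \<and> i < j \<and> j \<le> N}. y j - y i)"
proof -
  have "det_on {0<..0 + N} (\<lambda>r s. y s ^ (r - 1)) = (\<Prod>j\<in>{0<..N}. y j ^ 0)
      * (\<Prod>(i, j)\<in>{(i, j). i \<in> {0<..N} \<and> j \<in> {0<..N} \<and> i < j}. y j - y i)"
    by (rule det_on_power_rows) (simp_all add: nth_sorted_list_of_set_greaterThanAtMost)
  moreover have "{0<..0 + N} = {1..N}"
    by auto
  ultimately show ?thesis
    by (auto intro!: prod.cong)
qed

lemma vandermonde_laplace_last_rows:
  fixes y :: "nat \<Rightarrow> 'a::comm_ring_1"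
  assumes "k \<le> N"
  shows "(\<Sum>J | J \<subseteq> {1..N} \<and> card J = k. of_int (sgnIJ N {N - k<..N} J)
            * (\<Prod>j\<in>J. y j ^ (N - k))
            * (\<Prod>(i, j)\<in>{(i, j). i \<in> J \<and> j \<in> J \<and> i < j}. y j - y i)
            * (\<Prod>(i, j)\<in>{(i, j). i \<in> {1..N} - J \<and> j \<in> {1..N} - J \<and> i < j}. y j - y i))
         = (\<Prod>(i, j)\<in>{(i, j). 1 \<le> i \<and> i < j \<and> j \<le> N}. y j - y i)"
proof -
  have I: "{N - k<..N} \<subseteq> {1..N}" "card {N - k<..N} = k"
    using assms by auto
  have \<tau>: "shuffle_perm N {N - k<..N} J permutes {1..N} \<and> shuffle_perm N {N - k<..N} J ` {N - k<..N} = J"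
    if "J \<subseteq> {1..N}" "card J = card {N - k<..N}" for J
    using shuffle_perm_permutes[OF I(1) that] shuffle_perm_image[OF I(1) that] by simp
  have "(\<Prod>(i, j)\<in>{(i, j). 1 \<le> i \<and> i < j \<and> j \<le> N}. y j - y i) = det_on {1..N} (\<lambda>r s. y s ^ (r - 1))"
    by (rule det_on_power_rows_atLeastAtMost[symmetric])
  also have "\<dots> = (\<Sum>J | J \<subseteq> {1..N} \<and> card J = k. of_int (sign (shuffle_perm N {N - k<..N} J))
      * det_on {N - k<..N} (\<lambda>r s. y (shuffle_perm N {N - k<..N} J s) ^ (r - 1))
      * det_on ({1..N} - {N - k<..N}) (\<lambda>r s. y (shuffle_perm N {N - k<..N} J s) ^ (r - 1)))"
    by (rule det_on_laplace[OF finite_atLeastAtMost I(1) \<tau>, unfolded I(2)])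
  also have "\<dots> = (\<Sum>J | J \<subseteq> {1..N} \<and> card J = k. of_int (sgnIJ N {N - k<..N} J)
      * (\<Prod>j\<in>J. y j ^ (N - k))
      * (\<Prod>(i, j)\<in>{(i, j). i \<in> J \<and> j \<in> J \<and> i < j}. y j - y i)
      * (\<Prod>(i, j)\<in>{(i, j). i \<in> {1..N} - J \<and> j \<in> {1..N} - J \<and> i < j}. y j - y i))"
    by (intro sum.cong refl, elim CollectE conjE)
       (simp only: det_on_power_rows_shuffle_perm[OF assms] sgnIJ_eq_sign_shuffle_perm mult.assoc)
  finally show ?thesis ..
qed

theorem corollary2p4:
  fixes N k :: nat and \<xi> :: "nat \<Rightarrow> 'a::comm_ring_1"
  assumes "N \<ge> 1" and "k \<le> N"
  shows "(\<Sum>J\<in>{J. J \<subseteq> {1..N} \<and> card J = k}.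
            of_int (sgnIJ N {N-k+1..N} J)
            * (\<Prod>i\<in>J. (\<xi> i - 1) ^ (N - k))
            * (\<Prod>(i,j)\<in>{(i,j). i \<in> J \<and> j \<in> J \<and> i < j}. \<xi> j - \<xi> i)
            * (\<Prod>(i,j)\<in>{(i,j). i \<in> {1..N} - J \<and> j \<in> {1..N} - J \<and> i < j}. \<xi> j - \<xi> i))
         = (\<Prod>(i,j)\<in>{(i,j). 1 \<le> i \<and> i < j \<and> j \<le> N}. \<xi> j - \<xi> i)"
proof -
  have "{N - k + 1..N} = {N - k<..N}"
    by auto
  then show ?thesis
    using vandermonde_laplace_last_rows[OF \<open>k \<le> N\<close>, of "\<lambda>c. \<xi> c - 1"] by simp
qed

end
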